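(* For a random threshold graph $G$ on $n\ge1$ vertices and every integer $d\ge0$, $$P(\mathrm{degen}(G)=d)=\left(\tfrac12\right)^{n-1}\binom{n-1}{d}.$$
   Context: A threshold graph on $n\ge1$ vertices is built from a base vertex $v_0$ by successively adding $v_1,\dots,v_{n-1}$, each either isolated (adjacent to no earlier vertex) or dominating (adjacent to all earlier vertices); its creation sequence $\mathrm{seq}(G)=s_1\cdots s_{n-1}$ has $s_i=1$ if $v_i$ is dominating and $s_i=0$ otherwise, and each unlabeled threshold graph on $n$ vertices corresponds to exactly one binary string of length $n-1$. A random threshold graph on $n$ vertices is one whose creation sequence is uniformly distributed over all $2^{n-1}$ binary strings of length $n-1$. The degeneracy $\mathrm{degen}(G)$ is the maximum over nonempty induced subgraphs $H$ of $G$ of the minimum degree of $H$. *)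

theory Defs
  imports "HOL-Probability.Probability_Mass_Function"
begin

text \<open>Threshold graph on vertices 0..<n built from creation sequence s (a bool list of
length n-1; s!(i-1) = True iff vertex v_i is dominating).\<close>

definition thr_adj :: "bool list \<Rightarrow> nat \<Rightarrow> nat \<Rightarrow> bool" where
  "thr_adj s u v \<longleftrightarrow> u \<noteq> v \<and> (if u < v then s ! (v - 1) else s ! (u - 1))"

definition thr_vertices :: "bool list \<Rightarrow> nat set" where
  "thr_vertices s = {0..length s}"

definition min_degree :: "('a \<Rightarrow> 'a \<Rightarrow> bool) \<Rightarrow> 'a set \<Rightarrow> nat" where
  "min_degree adj H = Min ((\<lambda>v. card {w \<in> H. adj v w}) ` H)"

definition degen :: "('a \<Rightarrow> 'a \<Rightarrow> bool) \<Rightarrow> 'a set \<Rightarrow> nat" where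
  "degen adj V = Max ((\<lambda>H. min_degree adj H) ` {H. H \<subseteq> V \<and> H \<noteq> {}})"

definition random_threshold_seq :: "nat \<Rightarrow> bool list pmf" where
  "random_threshold_seq n = pmf_of_set {s. length s = n - 1}"

end

theory Submission
  imports Defs
begin

text \<open>The dominating vertices together with the base vertex form a clique, so the
degeneracy is at least their number \<open>k\<close>. Conversely, in any induced subgraph a vertex
that is not dominating is adjacent only to later dominating vertices, and a subgraph
consisting of dominating vertices has fewer than \<open>k\<close> other vertices; either way some
vertex has degree at most \<open>k\<close>. Hence the degeneracy is the number of ones in the
creation sequence, which is binomially distributed.\<close>

lemma min_degree_le_degree:
  assumes "finite H" "v \<in> H"
  shows "min_degree adj H \<le> card {w \<in> H. adj v w}"
  unfolding min_degree_def using assms by (intro Min_le) auto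

lemma min_degree_complete:
  assumes "finite H" "H \<noteq> {}" "\<And>v w. v \<in> H \<Longrightarrow> w \<in> H \<Longrightarrow> adj v w \<longleftrightarrow> v \<noteq> w"
  shows "min_degree adj H = card H - 1"
proof -
  have "{w \<in> H. adj v w} = H - {v}" if "v \<in> H" for v
    using assms(3) that by auto
  then have "(\<lambda>v. card {w \<in> H. adj v w}) ` H = {card H - 1}"
    using assms(1,2) by auto
  then show ?thesis
    by (simp add: min_degree_def)
qed

lemma degen_eqI:
  assumes "finite V" "H \<subseteq> V" "H \<noteq> {}" "min_degree adj H = k"
    and "\<And>H. H \<subseteq> V \<Longrightarrow> H \<noteq> {} \<Longrightarrow> min_degree adj H \<le> k"
  shows "degen adj V = k"
proof -
  have "finite {H. H \<subseteq> V \<and> H \<noteq> {}}"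
    using assms(1) by simp
  then show ?thesis
    unfolding degen_def using assms(2-5) by (intro Max_eqI) auto
qed

definition dominating_vertices :: "bool list \<Rightarrow> nat set" where
  "dominating_vertices s = {i \<in> {1..length s}. s ! (i - 1)}"

lemma thr_adj_dominating_clique:
  assumes "v \<in> insert 0 (dominating_vertices s)" "w \<in> insert 0 (dominating_vertices s)"
  shows "thr_adj s v w \<longleftrightarrow> v \<noteq> w"
  using assms by (auto simp: thr_adj_def dominating_vertices_def)

lemma thr_adj_non_dominating:
  assumes "v \<in> thr_vertices s" "w \<in> thr_vertices s"
    and "v \<notin> dominating_vertices s" "thr_adj s v w"
  shows "w \<in> dominating_vertices s"
  using assms by (cases "w < v") (auto simp: thr_adj_def dominating_vertices_def thr_vertices_def)

lemma degen_threshold_graph: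
  "degen (thr_adj s) (thr_vertices s) = card (dominating_vertices s)"
proof (rule degen_eqI)
  let ?D = "dominating_vertices s"
  have fin_D: "finite ?D" and base_not_dom: "0 \<notin> ?D"
    by (simp_all add: dominating_vertices_def)
  show "finite (thr_vertices s)"
    by (simp add: thr_vertices_def)
  show "insert 0 ?D \<subseteq> thr_vertices s" "insert 0 ?D \<noteq> {}"
    by (auto simp: dominating_vertices_def thr_vertices_def)
  show "min_degree (thr_adj s) (insert 0 ?D) = card ?D"
    using thr_adj_dominating_clique fin_D base_not_dom by (subst min_degree_complete) auto
  fix H assume H: "H \<subseteq> thr_vertices s" "H \<noteq> {}"
  then have fin_H: "finite H"
    by (auto intro: finite_subset simp: thr_vertices_def)
  obtain v where v: "v \<in> H" and nbrs: "{w \<in> H. thr_adj s v w} \<subseteq> ?D"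
  proof (cases "H \<subseteq> ?D")
    case True
    with H(2) that show ?thesis by blast
  next
    case False
    then obtain v where "v \<in> H" "v \<notin> ?D" by blast
    with H(1) thr_adj_non_dominating[of v s] that show ?thesis by blast
  qed
  have "min_degree (thr_adj s) H \<le> card {w \<in> H. thr_adj s v w}"
    using fin_H v by (rule min_degree_le_degree)
  also have "\<dots> \<le> card ?D"
    using nbrs fin_D by (rule card_mono[rotated])
  finally show "min_degree (thr_adj s) H \<le> card ?D" .
qed

lemma bij_betw_dominating_vertices:
  "bij_betw dominating_vertices {s. length s = m} (Pow {1..m})"
proof (rule bij_betw_byWitness[where f' = "\<lambda>B. map (\<lambda>i. Suc i \<in> B) [0..<m]"])
  show "\<forall>s\<in>{s. length s = m}. map (\<lambda>i. Suc i \<in> dominating_vertices s) [0..<m] = s"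
    by (auto simp: dominating_vertices_def intro!: nth_equalityI)
  show "\<forall>B\<in>Pow {1..m}. dominating_vertices (map (\<lambda>i. Suc i \<in> B) [0..<m]) = B"
  proof
    fix B assume "B \<in> Pow {1..m}"
    then show "dominating_vertices (map (\<lambda>i. Suc i \<in> B) [0..<m]) = B"
      by (intro set_eqI, case_tac x) (auto simp: dominating_vertices_def)
  qed
  show "dominating_vertices ` {s. length s = m} \<subseteq> Pow {1..m}"
    by (auto simp: dominating_vertices_def)
  show "(\<lambda>B. map (\<lambda>i. Suc i \<in> B) [0..<m]) ` Pow {1..m} \<subseteq> {s. length s = m}"
    by auto
qed

lemma card_seqs_with_card_dominating_vertices:
  "card {s. length s = m \<and> card (dominating_vertices s) = d} = m choose d"
proof -
  have "bij_betw dominating_vertices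
          {s \<in> {s. length s = m}. card (dominating_vertices s) = d} {B \<in> Pow {1..m}. card B = d}"
    using bij_betw_dominating_vertices by (rule bij_betw_Collect) simp
  then have "card {s. length s = m \<and> card (dominating_vertices s) = d}
               = card {B \<in> Pow {1..m}. card B = d}"
    by (simp add: bij_betw_same_card)
  also have "\<dots> = m choose d"
    using n_subsets[of "{1..m}" d] by (simp add: Collect_conj_eq)
  finally show ?thesis .
qed

theorem mainTheorem13:
  fixes n d :: nat
  assumes "n \<ge> 1"
  shows "measure_pmf.prob (random_threshold_seq n)
           {s. degen (thr_adj s) (thr_vertices s) = d}
         = (1/2) ^ (n - 1) * real ((n - 1) choose d)"
proof -
  let ?S = "{s :: bool list. length s = n - 1}"
  have "finite ?S" "?S \<noteq> {}"
    using finite_lists_length_eq[of "UNIV :: bool set" "n - 1"]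
    by (auto intro: exI[of _ "replicate (n - 1) True"])
  moreover have "card ?S = 2 ^ (n - 1)"
    using card_lists_length_eq[of "UNIV :: bool set" "n - 1"] by simp
  moreover have "?S \<inter> {s. degen (thr_adj s) (thr_vertices s) = d}
                   = {s. length s = n - 1 \<and> card (dominating_vertices s) = d}"
    by (auto simp: degen_threshold_graph)
  ultimately show ?thesis
    unfolding random_threshold_seq_def
    by (simp add: measure_pmf_of_set card_seqs_with_card_dominating_vertices power_one_over)
qed

end
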